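(* Let $P$ be a finite set of points and $\mathcal{R}$ a finite family of axis-aligned squares in the plane, let $k\ge1$ and $1\le\alpha\le k$ be integers, and let $m^*$ be the optimal number of points of $P$ exposable by deleting $k$ squares. Then the algorithm Greedy-Squares computes a set of at most $\alpha k$ squares whose deletion exposes at least $\alpha m^*/k$ points.
   Context: A point is exposed with respect to a family of squares if it lies in none of them. For $p\in P$ let $\mathcal{R}(p)$ be the set of squares containing $p$, and let $\mathcal{A}(p)$ be a smallest square in $\mathcal{R}(p)$ (ties broken by a fixed rule); for $R\in\mathcal{R}$ let $\mathcal{P}_R=\mathcal{A}^{-1}(R)$. Algorithm Greedy-Squares: (1) for every $R\in\mathcal{R}$, compute exactly a maximum subset $P(R,k)\subseteq\mathcal{P}_R$ of points that can be exposed by deleting $k$ squares of $\mathcal{R}$, together with such a set of $k$ squares; (2) order the squares by decreasing $|P(R,k)|$ and let $\mathcal{S}$ be the first $\alpha$ of them; (3) delete the union of the corresponding deletion sets for $R\in\mathcal{S}$ and return $\bigcup_{R\in\mathcal{S}}P(R,k)$ as the set of exposed points. *)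

theory Defs
  imports Complex_Main
begin

text \<open>Points of the plane are pairs of reals.  An axis-aligned (closed) square is
  encoded by a triple (x, y, s): lower-left corner (x, y) and side length s > 0.\<close>

type_synonym point = "real \<times> real"
type_synonym square = "real \<times> real \<times> real"

definition side :: "square \<Rightarrow> real" where
  "side R = snd (snd R)"

definition valid_square :: "square \<Rightarrow> bool" where
  "valid_square R \<longleftrightarrow> side R > 0"

definition in_square :: "point \<Rightarrow> square \<Rightarrow> bool" where
  "in_square p R \<longleftrightarrow> fst R \<le> fst p \<and> fst p \<le> fst R + side R
                    \<and> fst (snd R) \<le> snd p \<and> snd p \<le> fst (snd R) + side R"

definition exposed :: "square set \<Rightarrow> point \<Rightarrow> bool" where
  "exposed Q p \<longleftrightarrow> (\<forall>R\<in>Q. \<not> in_square p R)"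

definition exposed_after :: "square set \<Rightarrow> square set \<Rightarrow> point set \<Rightarrow> point set" where
  "exposed_after \<R> D X = {p \<in> X. exposed (\<R> - D) p}"

definition containing :: "square set \<Rightarrow> point \<Rightarrow> square set" where
  "containing \<R> p = {R \<in> \<R>. in_square p R}"

definition opt_exposed :: "point set \<Rightarrow> square set \<Rightarrow> nat \<Rightarrow> nat" where
  "opt_exposed P \<R> k = Max {card (exposed_after \<R> D P) | D. D \<subseteq> \<R> \<and> card D \<le> k}"

text \<open>A valid run of Greedy-Squares, given the choices made by the algorithm:
  A = the smallest-square assignment (any tie breaking), PRk R = P(R,k),
  Del R = the deletion set realising P(R,k), S = the selected squares.\<close>
definition greedy_squares_run ::
  "point set \<Rightarrow> square set \<Rightarrow> nat \<Rightarrow> nat \<Rightarrow> (point \<Rightarrow> square)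
   \<Rightarrow> (square \<Rightarrow> point set) \<Rightarrow> (square \<Rightarrow> square set) \<Rightarrow> square set \<Rightarrow> bool" where
  "greedy_squares_run P \<R> k \<alpha> A PRk Del S \<longleftrightarrow>
     (\<forall>p\<in>P. containing \<R> p \<noteq> {} \<longrightarrow>
        A p \<in> containing \<R> p \<and> (\<forall>R\<in>containing \<R> p. side (A p) \<le> side R))
   \<and> (\<forall>R\<in>\<R>.
        let PR = {p \<in> P. containing \<R> p \<noteq> {} \<and> A p = R} in
        Del R \<subseteq> \<R> \<and> card (Del R) \<le> k \<and>
        PRk R = exposed_after \<R> (Del R) PR \<and>
        (\<forall>D. D \<subseteq> \<R> \<and> card D \<le> k \<longrightarrow> card (exposed_after \<R> D PR) \<le> card (PRk R)))
   \<and> S \<subseteq> \<R> \<and> card S = min \<alpha> (card \<R>)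
   \<and> (\<forall>R\<in>S. \<forall>R'\<in>\<R> - S. card (PRk R') \<le> card (PRk R))"

end

theory Submission
  imports Defs
begin

text \<open>Every point lying in some square is assigned to a square containing it, so a point
  exposed by deleting a set D of at most k squares lies in \<P>_R for some R in D; by the maximality
  of P(R,k), at most |P(R,k)| points of \<P>_R are exposed by D.  Hence the optimum is at most the
  number of points in no square plus the sum of |P(R,k)| over R in D, whereas the greedy deletion
  exposes the points in no square together with the disjoint sets P(R,k), R in S.  As S consists of
  \<alpha> squares with largest |P(R,k)|, its sum is at least \<alpha>/k times the sum over any k squares.\<close>

lemma sum_le_by_threshold:
  fixes f :: "'a \<Rightarrow> 'b::linordered_idom"
  assumes "finite S" "finite T" "card S = \<alpha>" "card T \<le> k" "\<alpha> \<le> k" "0 \<le> t"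
    and above: "\<forall>x\<in>S. t \<le> f x" and below: "\<forall>x\<in>T - S. f x \<le> t"
  shows "of_nat \<alpha> * sum f T \<le> of_nat k * sum f S"
proof -
  define j where "j = card (T \<inter> S)"
  define a where "a = sum f (T \<inter> S)"
  have "j \<le> \<alpha>"
    unfolding j_def using assms(1,3) by (metis card_mono inf_le2)
  have "card T = j + card (T - S)"
    unfolding j_def using assms(2) by (metis card_Int_Diff)
  then have "card (T - S) \<le> k - j"
    using assms(4) by linarith
  have a_ge: "of_nat j * t \<le> a"
    unfolding a_def j_def using above sum_bounded_below[of "T \<inter> S" t f] by auto
  have "sum f T = a + sum f (T - S)"
    unfolding a_def using assms(2) by (metis sum.Int_Diff)
  also have "\<dots> \<le> a + of_nat (card (T - S)) * t"
    using below sum_bounded_above[of "T - S" f t] by auto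
  also have "\<dots> \<le> a + of_nat (k - j) * t"
    using \<open>card (T - S) \<le> k - j\<close> assms(6)
    by (intro add_left_mono mult_right_mono) (simp_all only: of_nat_le_iff)
  finally have T_le: "sum f T \<le> a + of_nat (k - j) * t" .
  have "card (S - T) = \<alpha> - j"
    unfolding j_def using assms(1,3) by (metis Int_commute card_Diff_subset_Int finite_Int)
  then have "a + of_nat (\<alpha> - j) * t \<le> a + sum f (S - T)"
    using above sum_bounded_below[of "S - T" t f] by auto
  also have "\<dots> = sum f S"
    unfolding a_def using assms(1) by (metis Int_commute sum.Int_Diff)
  finally have S_ge: "a + of_nat (\<alpha> - j) * t \<le> sum f S" .
  have "0 \<le> (of_nat k - of_nat \<alpha>) * (a - of_nat j * t)"
    using a_ge assms(5) by (simp add: mult_nonneg_nonneg)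
  then have "of_nat \<alpha> * (a + of_nat (k - j) * t) \<le> of_nat k * (a + of_nat (\<alpha> - j) * t)"
    using \<open>j \<le> \<alpha>\<close> assms(5) by (simp add: of_nat_diff algebra_simps)
  also have "\<dots> \<le> of_nat k * sum f S"
    using S_ge by (simp add: mult_left_mono)
  finally show ?thesis
    using T_le by (meson mult_left_mono of_nat_0_le_iff order_trans)
qed

lemma sum_top_selection_le:
  fixes f :: "'a \<Rightarrow> 'b::linordered_idom"
  assumes "finite Rs" "S \<subseteq> Rs" "card S = min \<alpha> (card Rs)"
    and top: "\<forall>s\<in>S. \<forall>y\<in>Rs - S. f y \<le> f s"
    and nonneg: "\<forall>x\<in>Rs. 0 \<le> f x"
    and "T \<subseteq> Rs" "card T \<le> k" "\<alpha> \<le> k"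
  shows "of_nat \<alpha> * sum f T \<le> of_nat k * sum f S"
proof (cases "S = Rs")
  case True
  then have "sum f T \<le> sum f S"
    using assms(1,6) nonneg by (intro sum_mono2) auto
  moreover have "0 \<le> sum f T"
    using assms(6) nonneg by (auto intro: sum_nonneg)
  ultimately show ?thesis
    using assms(8) by (intro mult_mono) auto
next
  case False
  then have "card S < card Rs"
    using assms(1,2) by (blast intro: psubset_card_mono)
  then have "card S = \<alpha>"
    using assms(3) by linarith
  show ?thesis
  proof (cases "S = {}")
    case True
    then show ?thesis
      using \<open>card S = \<alpha>\<close> by simp
  next
    case False
    have "finite S"
      using assms(1,2) finite_subset by blast
    define t where "t = Min (f ` S)"
    have "t \<in> f ` S"
      unfolding t_def using \<open>finite S\<close> False by simp
    show ?thesis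
    proof (rule sum_le_by_threshold[where t = t])
      show "0 \<le> t"
        using \<open>t \<in> f ` S\<close> assms(2) nonneg by auto
      show "\<forall>x\<in>S. t \<le> f x"
        unfolding t_def using \<open>finite S\<close> by simp
      show "\<forall>x\<in>T - S. f x \<le> t"
        using \<open>t \<in> f ` S\<close> top assms(6) by auto
    qed (simp_all add: \<open>finite S\<close> \<open>card S = \<alpha>\<close> assms(7,8) finite_subset[OF assms(6,1)])
  qed
qed

lemma exposed_after_mono:
  "D \<subseteq> D' \<Longrightarrow> X \<subseteq> Y \<Longrightarrow> exposed_after \<R> D X \<subseteq> exposed_after \<R> D' Y"
  unfolding exposed_after_def exposed_def by blast

lemma opt_exposed_attained:
  assumes "finite \<R>"
  obtains D where "D \<subseteq> \<R>" "card D \<le> k" "opt_exposed P \<R> k = card (exposed_after \<R> D P)"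
proof -
  let ?M = "{card (exposed_after \<R> D P) | D. D \<subseteq> \<R> \<and> card D \<le> k}"
  have "?M = (\<lambda>D. card (exposed_after \<R> D P)) ` {D. D \<subseteq> \<R> \<and> card D \<le> k}"
    by blast
  then have "finite ?M"
    using assms by simp
  moreover have "?M \<noteq> {}"
    by force
  ultimately have "opt_exposed P \<R> k \<in> ?M"
    unfolding opt_exposed_def by (rule Max_in)
  then show ?thesis
    using that by blast
qed

definition uncovered_points :: "point set \<Rightarrow> square set \<Rightarrow> point set" where
  "uncovered_points P \<R> = {p \<in> P. containing \<R> p = {}}"

text \<open>The paper's \<P>_R, the preimage of R under \<A>, which is only meaningful on points
  lying in some square.\<close>
definition assigned_points ::
  "point set \<Rightarrow> square set \<Rightarrow> (point \<Rightarrow> square) \<Rightarrow> square \<Rightarrow> point set" where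
  "assigned_points P \<R> A R = {p \<in> P. containing \<R> p \<noteq> {} \<and> A p = R}"

lemma assigned_points_disjoint:
  "R \<noteq> R' \<Longrightarrow> assigned_points P \<R> A R \<inter> assigned_points P \<R> A R' = {}"
  unfolding assigned_points_def by blast

lemma uncovered_points_exposed: "uncovered_points P \<R> \<subseteq> exposed_after \<R> D P"
  unfolding uncovered_points_def exposed_after_def exposed_def containing_def by auto

lemma exposed_after_subset_assigned:
  assumes "\<forall>p\<in>P. containing \<R> p \<noteq> {} \<longrightarrow> A p \<in> containing \<R> p"
  shows "exposed_after \<R> D P
    \<subseteq> uncovered_points P \<R> \<union> (\<Union>R\<in>D. exposed_after \<R> D (assigned_points P \<R> A R))"
proof
  fix p
  assume p: "p \<in> exposed_after \<R> D P"
  show "p \<in> uncovered_points P \<R> \<union> (\<Union>R\<in>D. exposed_after \<R> D (assigned_points P \<R> A R))"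
  proof (cases "containing \<R> p = {}")
    case True
    then show ?thesis
      using p unfolding exposed_after_def uncovered_points_def by blast
  next
    case False
    then have "A p \<in> containing \<R> p"
      using assms p unfolding exposed_after_def by blast
    then have "A p \<in> D"
      using p unfolding exposed_after_def exposed_def containing_def by blast
    then show ?thesis
      using p False unfolding exposed_after_def assigned_points_def by blast
  qed
qed

lemma card_exposed_after_le_assigned:
  assumes "finite P" "finite D"
    and "\<forall>p\<in>P. containing \<R> p \<noteq> {} \<longrightarrow> A p \<in> containing \<R> p"
  shows "card (exposed_after \<R> D P)
    \<le> card (uncovered_points P \<R>) + (\<Sum>R\<in>D. card (exposed_after \<R> D (assigned_points P \<R> A R)))"
proof -
  have "finite (\<Union>R\<in>D. exposed_after \<R> D (assigned_points P \<R> A R))"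
    using assms(1,2) by (simp add: exposed_after_def assigned_points_def)
  then have "card (exposed_after \<R> D P)
      \<le> card (uncovered_points P \<R> \<union> (\<Union>R\<in>D. exposed_after \<R> D (assigned_points P \<R> A R)))"
    using assms(1) exposed_after_subset_assigned[OF assms(3)]
    by (intro card_mono) (simp_all add: uncovered_points_def)
  also have "\<dots> \<le> card (uncovered_points P \<R>)
      + card (\<Union>R\<in>D. exposed_after \<R> D (assigned_points P \<R> A R))"
    by (rule card_Un_le)
  also have "\<dots> \<le> card (uncovered_points P \<R>)
      + (\<Sum>R\<in>D. card (exposed_after \<R> D (assigned_points P \<R> A R)))"
    using card_UN_le[OF assms(2)] by simp
  finally show ?thesis .
qed

locale greedy_squares =
  fixes P :: "point set" and \<R> :: "square set" and k \<alpha> :: nat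
    and A :: "point \<Rightarrow> square" and PRk :: "square \<Rightarrow> point set"
    and Del :: "square \<Rightarrow> square set" and S :: "square set"
  assumes finite_P: "finite P" and finite_\<R>: "finite \<R>"
    and run: "greedy_squares_run P \<R> k \<alpha> A PRk Del S"
begin

lemma A_containing: "\<forall>p\<in>P. containing \<R> p \<noteq> {} \<longrightarrow> A p \<in> containing \<R> p"
  using run unfolding greedy_squares_run_def by blast

lemma
  assumes "R \<in> \<R>"
  shows Del_subset: "Del R \<subseteq> \<R>" and card_Del_le: "card (Del R) \<le> k"
    and PRk_eq: "PRk R = exposed_after \<R> (Del R) (assigned_points P \<R> A R)"
    and PRk_maximal: "\<And>D. D \<subseteq> \<R> \<Longrightarrow> card D \<le> k
      \<Longrightarrow> card (exposed_after \<R> D (assigned_points P \<R> A R)) \<le> card (PRk R)"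
  using run assms unfolding greedy_squares_run_def assigned_points_def Let_def by blast+

lemma S_subset: "S \<subseteq> \<R>"
    and card_S: "card S = min \<alpha> (card \<R>)"
    and S_top: "\<forall>R\<in>S. \<forall>R'\<in>\<R> - S. card (PRk R') \<le> card (PRk R)"
  using run unfolding greedy_squares_run_def by blast+

lemma finite_S: "finite S"
  using S_subset finite_\<R> finite_subset by blast

lemma greedy_deletions_subset: "(\<Union>R\<in>S. Del R) \<subseteq> \<R>"
  using Del_subset S_subset by blast

lemma card_greedy_deletions_le: "card (\<Union>R\<in>S. Del R) \<le> \<alpha> * k"
proof -
  have "card (\<Union>R\<in>S. Del R) \<le> (\<Sum>R\<in>S. card (Del R))"
    using finite_S by (rule card_UN_le)
  also have "\<dots> \<le> card S * k"
    using sum_bounded_above[of S "\<lambda>R. card (Del R)" k] card_Del_le S_subset by auto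
  also have "\<dots> \<le> \<alpha> * k"
    using card_S by simp
  finally show ?thesis .
qed

lemma greedy_points_exposed: "(\<Union>R\<in>S. PRk R) \<subseteq> exposed_after \<R> (\<Union>R\<in>S. Del R) P"
proof (intro UN_least)
  fix R
  assume "R \<in> S"
  then have "R \<in> \<R>"
    using S_subset by blast
  show "PRk R \<subseteq> exposed_after \<R> (\<Union>R\<in>S. Del R) P"
    unfolding PRk_eq[OF \<open>R \<in> \<R>\<close>] using \<open>R \<in> S\<close>
    by (intro exposed_after_mono) (auto simp: assigned_points_def)
qed

lemma PRk_subset_assigned: "R \<in> \<R> \<Longrightarrow> PRk R \<subseteq> assigned_points P \<R> A R"
  using PRk_eq unfolding exposed_after_def by blast

lemma card_greedy_exposed_ge:
  "card (uncovered_points P \<R>) + (\<Sum>R\<in>S. card (PRk R))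
    \<le> card (exposed_after \<R> (\<Union>R\<in>S. Del R) P)"
proof -
  have "PRk R \<subseteq> P" if "R \<in> S" for R
    using PRk_subset_assigned that S_subset unfolding assigned_points_def by blast
  then have finite_PRk: "\<forall>R\<in>S. finite (PRk R)"
    using finite_P finite_subset by blast
  have "\<forall>R\<in>S. \<forall>R'\<in>S. R \<noteq> R' \<longrightarrow> PRk R \<inter> PRk R' = {}"
    using PRk_subset_assigned assigned_points_disjoint S_subset by (meson disjoint_iff subsetD)
  then have "(\<Sum>R\<in>S. card (PRk R)) = card (\<Union>R\<in>S. PRk R)"
    using finite_S finite_PRk by (intro card_UN_disjoint[symmetric])
  moreover have "uncovered_points P \<R> \<inter> (\<Union>R\<in>S. PRk R) = {}"
    using PRk_subset_assigned S_subset unfolding uncovered_points_def assigned_points_def by blast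
  ultimately have "card (uncovered_points P \<R>) + (\<Sum>R\<in>S. card (PRk R))
      = card (uncovered_points P \<R> \<union> (\<Union>R\<in>S. PRk R))"
    using finite_P finite_S finite_PRk by (simp add: card_Un_disjoint uncovered_points_def)
  also have "\<dots> \<le> card (exposed_after \<R> (\<Union>R\<in>S. Del R) P)"
    using uncovered_points_exposed greedy_points_exposed finite_P
    by (intro card_mono) (auto simp: exposed_after_def)
  finally show ?thesis .
qed

lemma card_exposed_le_PRk:
  assumes "D \<subseteq> \<R>" "card D \<le> k"
  shows "card (exposed_after \<R> D P) \<le> card (uncovered_points P \<R>) + (\<Sum>R\<in>D. card (PRk R))"
proof -
  have "finite D"
    using assms(1) finite_\<R> finite_subset by blast
  have "(\<Sum>R\<in>D. card (exposed_after \<R> D (assigned_points P \<R> A R))) \<le> (\<Sum>R\<in>D. card (PRk R))"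
    using assms PRk_maximal by (intro sum_mono) blast
  then show ?thesis
    using card_exposed_after_le_assigned[OF finite_P \<open>finite D\<close> A_containing] by linarith
qed

lemma greedy_approximation:
  assumes "\<alpha> \<le> k" "D \<subseteq> \<R>" "card D \<le> k"
  shows "real \<alpha> * card (exposed_after \<R> D P)
    \<le> real k * card (exposed_after \<R> (\<Union>R\<in>S. Del R) P)"
proof -
  let ?u = "real (card (uncovered_points P \<R>))" and ?f = "\<lambda>R. real (card (PRk R))"
  have "real \<alpha> * card (exposed_after \<R> D P) \<le> real \<alpha> * (?u + sum ?f D)"
    using card_exposed_le_PRk[OF assms(2,3)] by (intro mult_left_mono) (simp_all flip: of_nat_sum)
  also have "\<dots> \<le> real k * (?u + sum ?f S)"
    using sum_top_selection_le[OF finite_\<R> S_subset card_S _ _ assms(2,3,1), of ?f]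
      S_top assms(1)
    by (simp add: distrib_left mult_right_mono add_mono)
  also have "\<dots> \<le> real k * card (exposed_after \<R> (\<Union>R\<in>S. Del R) P)"
    using card_greedy_exposed_ge by (intro mult_left_mono) (simp_all flip: of_nat_sum of_nat_add)
  finally show ?thesis .
qed

end

theorem mainTheorem15:
  fixes P :: "point set" and \<R> :: "square set" and k \<alpha> :: nat
    and A :: "point \<Rightarrow> square" and PRk :: "square \<Rightarrow> point set"
    and Del :: "square \<Rightarrow> square set" and S :: "square set"
  assumes "finite P" and "finite \<R>" and "\<forall>R\<in>\<R>. valid_square R"
    and "k \<ge> 1" and "1 \<le> \<alpha>" and "\<alpha> \<le> k"
    and "greedy_squares_run P \<R> k \<alpha> A PRk Del S"
  shows "(\<Union>R\<in>S. Del R) \<subseteq> \<R>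
       \<and> card (\<Union>R\<in>S. Del R) \<le> \<alpha> * k
       \<and> (\<Union>R\<in>S. PRk R) \<subseteq> exposed_after \<R> (\<Union>R\<in>S. Del R) P
       \<and> real (card (exposed_after \<R> (\<Union>R\<in>S. Del R) P))
           \<ge> real \<alpha> * real (opt_exposed P \<R> k) / real k"
proof -
  interpret greedy_squares P \<R> k \<alpha> A PRk Del S
    using assms(1,2,7) by unfold_locales
  obtain D where "D \<subseteq> \<R>" "card D \<le> k"
    and opt: "opt_exposed P \<R> k = card (exposed_after \<R> D P)"
    using opt_exposed_attained[OF assms(2)] .
  have "real \<alpha> * real (opt_exposed P \<R> k)
      \<le> real k * real (card (exposed_after \<R> (\<Union>R\<in>S. Del R) P))"
    unfolding opt using greedy_approximation[OF assms(6) \<open>D \<subseteq> \<R>\<close> \<open>card D \<le> k\<close>] .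
  then have "real \<alpha> * real (opt_exposed P \<R> k) / real k
      \<le> real (card (exposed_after \<R> (\<Union>R\<in>S. Del R) P))"
    using assms(4) by (simp add: divide_le_eq mult.commute)
  then show ?thesis
    using greedy_deletions_subset card_greedy_deletions_le greedy_points_exposed by blast
qed

end
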